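(* Let $(X_n)_{n\ge0}$, $(Z_n)_{n\ge0}$, $(\bar Z_n)_{n\ge0}$ be random processes on a common probability space, adapted to a filtration $(\mathcal F_n)$ and taking values in a measurable space $\Omega$, with $X_n\sim p_n$, $Z_n\sim q_n$, $\bar Z_n\sim\bar q_n$. Let $B_n\subseteq\Omega$ be measurable sets such that for every $n\in\mathbb{N}_0$: (1) if $X_k\in B_k^c$ for all $0\le k\le n-1$, then $Z_n=\bar Z_n$; (2) $\chi^2(\bar q_n\|p_n)\le D_n^2$; (3) $\mathbb{P}(X_n\in B_n)\le\delta_n$. Then for every $n$, $$\mathrm{TV}(q_n,\bar q_n)\le\sum_{k=0}^{n-1}(D_k^2+1)^{1/2}\delta_k^{1/2},\qquad \mathrm{TV}(p_n,q_n)\le D_n+\sum_{k=0}^{n-1}(D_k^2+1)^{1/2}\delta_k^{1/2}.$$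
   Context: $\chi^2(q\|p)=\int (dq/dp)^2\,dp-1$ (infinite if $q\not\ll p$); $\mathrm{TV}$ denotes total variation distance. *)

theory Defs
  imports "HOL-Probability.Probability"
begin

definition chi_sq :: "'b measure \<Rightarrow> 'b measure \<Rightarrow> ereal" where
  "chi_sq q p =
     (if absolutely_continuous p q
      then enn2ereal (\<integral>\<^sup>+ x. (RN_deriv p q x)\<^sup>2 \<partial>p) - 1
      else \<infinity>)"

definition tv_dist :: "'b measure \<Rightarrow> 'b measure \<Rightarrow> real" where
  "tv_dist p q = (SUP A \<in> sets p. \<bar>measure p A - measure q A\<bar>)"

end

theory Submission
  imports Defs
begin

(* Z_n and Zbar_n agree outside the event that X_k hits B_k for some k < n, so by coupling and the
   union bound TV(q_n, qbar_n) is at most the sum of the delta_k.  Writing qbar_n = g p_n, for every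
   event A we have qbar_n(A) - p_n(A) = E_p[(g - 1) 1_A], whose square is at most
   E_p[(g - 1)^2] = chi^2(qbar_n || p_n) <= D_n^2; the triangle inequality gives the second bound. *)

lemma tv_dist_le:
  assumes "\<And>A. A \<in> sets P \<Longrightarrow> \<bar>measure P A - measure Q A\<bar> \<le> c"
  shows "tv_dist P Q \<le> c"
  unfolding tv_dist_def using assms by (intro cSUP_least) auto

lemma measure_diff_le_tv_dist:
  assumes "finite_measure P" "finite_measure Q" "A \<in> sets P"
  shows "\<bar>measure P A - measure Q A\<bar> \<le> tv_dist P Q"
proof -
  have "\<bar>measure P B - measure Q B\<bar> \<le> measure P (space P) + measure Q (space Q)" for B
    using finite_measure.bounded_measure[OF assms(1), of B]
      finite_measure.bounded_measure[OF assms(2), of B]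
      measure_nonneg[of P B] measure_nonneg[of Q B] by linarith
  then have "bdd_above ((\<lambda>B. \<bar>measure P B - measure Q B\<bar>) ` sets P)"
    by (intro bdd_aboveI2)
  then show ?thesis
    unfolding tv_dist_def using assms(3) by (rule cSUP_upper2) simp
qed

lemma tv_dist_commute:
  assumes "sets P = sets Q"
  shows "tv_dist P Q = tv_dist Q P"
  unfolding tv_dist_def assms by (simp add: abs_minus_commute)

lemma tv_dist_triangle:
  assumes "finite_measure P" "finite_measure Q" "finite_measure R" "sets Q = sets P"
  shows "tv_dist P R \<le> tv_dist P Q + tv_dist Q R"
proof (rule tv_dist_le)
  fix A assume "A \<in> sets P"
  then have "\<bar>measure P A - measure Q A\<bar> \<le> tv_dist P Q" "\<bar>measure Q A - measure R A\<bar> \<le> tv_dist Q R"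
    using assms by (auto intro!: measure_diff_le_tv_dist)
  then show "\<bar>measure P A - measure R A\<bar> \<le> tv_dist P Q + tv_dist Q R"
    by linarith
qed

lemma (in prob_space) tv_dist_distr_le_prob:
  assumes [measurable]: "Y \<in> M \<rightarrow>\<^sub>M N" "Y' \<in> M \<rightarrow>\<^sub>M N"
    and C: "C \<in> events" and agree: "\<And>\<omega>. \<omega> \<in> space M - C \<Longrightarrow> Y \<omega> = Y' \<omega>"
  shows "tv_dist (distr M N Y) (distr M N Y') \<le> prob C"
proof (rule tv_dist_le)
  fix A assume "A \<in> sets (distr M N Y)"
  then have [measurable]: "A \<in> sets N" by simp
  define E E' where "E = Y -` A \<inter> space M" and "E' = Y' -` A \<inter> space M"
  have [measurable]: "E \<in> events" "E' \<in> events"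
    unfolding E_def E'_def by measurable
  have "E \<subseteq> E' \<union> C" "E' \<subseteq> E \<union> C"
    unfolding E_def E'_def using agree by auto
  then have "prob E \<le> prob E' + prob C" "prob E' \<le> prob E + prob C"
    using C by (auto intro!: order_trans[OF finite_measure_mono measure_Un_le])
  moreover have "measure (distr M N Y) A = prob E" "measure (distr M N Y') A = prob E'"
    unfolding E_def E'_def by (simp_all add: measure_distr)
  ultimately show "\<bar>measure (distr M N Y) A - measure (distr M N Y') A\<bar> \<le> prob C"
    by linarith
qed

lemma (in prob_space) square_expectation_le:
  fixes X :: "'a \<Rightarrow> real"
  assumes "integrable M X" "integrable M (\<lambda>x. (X x)\<^sup>2)"
  shows "(expectation X)\<^sup>2 \<le> expectation (\<lambda>x. (X x)\<^sup>2)"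
  using variance_eq[OF assms] variance_positive[of X] by simp

lemma (in prob_space) measure_density_diff_le_sqrt:
  fixes g :: "'a \<Rightarrow> real"
  assumes [measurable]: "g \<in> borel_measurable M" and g_nonneg: "\<And>x. 0 \<le> g x"
    and g_sq: "integrable M (\<lambda>x. (g x)\<^sup>2)" and g_mean: "expectation g = 1"
    and A[measurable]: "A \<in> events"
  shows "\<bar>measure (density M g) A - prob A\<bar> \<le> sqrt (expectation (\<lambda>x. (g x)\<^sup>2) - 1)"
proof -
  have g: "integrable M g"
    using g_sq by (rule square_integrable_imp_integrable[rotated]) simp
  have g_dev_sq: "integrable M (\<lambda>x. (g x - 1)\<^sup>2)"
    using g g_sq by (simp add: power2_diff)
  define h where "h x = (g x - 1) * indicator A x" for x
  have h: "integrable M h"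
    unfolding h_def using g by (intro integrable_real_mult_indicator) auto
  have h_sq_le: "(h x)\<^sup>2 \<le> (g x - 1)\<^sup>2" for x
    unfolding h_def by (simp add: indicator_def)
  have h_sq: "integrable M (\<lambda>x. (h x)\<^sup>2)"
    by (rule Bochner_Integration.integrable_bound[OF g_dev_sq])
       (use h_sq_le in \<open>auto simp: h_def\<close>)
  have "measure (density M g) A = expectation (\<lambda>x. g x * indicator A x)"
    using integral_density[of "indicator A :: _ \<Rightarrow> real" M g] g_nonneg sets.sets_into_space[OF A]
    by (simp add: Int_absorb2)
  moreover have "expectation h = expectation (\<lambda>x. g x * indicator A x) - prob A"
    unfolding h_def left_diff_distrib using g sets.sets_into_space[OF A]
    by (subst Bochner_Integration.integral_diff)
       (auto simp: Int_absorb2 integrable_real_mult_indicator emeasure_eq_measure A)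
  ultimately have "expectation h = measure (density M g) A - prob A"
    by simp
  moreover have "(expectation h)\<^sup>2 \<le> expectation (\<lambda>x. (g x)\<^sup>2) - 1"
  proof -
    have "(expectation h)\<^sup>2 \<le> expectation (\<lambda>x. (h x)\<^sup>2)"
      using h h_sq by (rule square_expectation_le)
    also have "\<dots> \<le> expectation (\<lambda>x. (g x - 1)\<^sup>2)"
      using g_dev_sq h_sq h_sq_le by (intro integral_mono) auto
    also have "\<dots> = expectation (\<lambda>x. (g x)\<^sup>2) - 1"
      using g g_sq g_mean by (simp add: power2_diff prob_space)
    finally show ?thesis .
  qed
  ultimately show ?thesis
    by (metis power2_abs real_le_rsqrt)
qed

lemma chi_sq_le_imp_RN_deriv:
  assumes "chi_sq Q P \<le> ereal c"
  shows "absolutely_continuous P Q" and "(\<integral>\<^sup>+x. (RN_deriv P Q x)\<^sup>2 \<partial>P) \<le> ennreal (c + 1)"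
proof -
  show ac: "absolutely_continuous P Q"
    using assms unfolding chi_sq_def by (auto split: if_splits)
  have "enn2ereal (\<integral>\<^sup>+x. (RN_deriv P Q x)\<^sup>2 \<partial>P) - 1 \<le> ereal c"
    using assms ac unfolding chi_sq_def by simp
  then show "(\<integral>\<^sup>+x. (RN_deriv P Q x)\<^sup>2 \<partial>P) \<le> ennreal (c + 1)"
    by (cases "\<integral>\<^sup>+x. (RN_deriv P Q x)\<^sup>2 \<partial>P" rule: ennreal_cases)
       (auto simp: one_ereal_def intro: ennreal_leI)
qed

lemma chi_sq_le_densityE:
  fixes c :: real
  assumes "prob_space P" "prob_space Q" "sets Q = sets P" "chi_sq Q P \<le> ereal c" "0 \<le> c"
  obtains g :: "'b \<Rightarrow> real" where "g \<in> borel_measurable P" "\<And>x. 0 \<le> g x"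
    "Q = density P g" "integrable P (\<lambda>x. (g x)\<^sup>2)" "(\<integral>x. (g x)\<^sup>2 \<partial>P) \<le> c + 1"
proof
  interpret P: prob_space P by fact
  interpret Q: prob_space Q by fact
  have ac: "absolutely_continuous P Q"
    and RN_sq: "(\<integral>\<^sup>+x. (RN_deriv P Q x)\<^sup>2 \<partial>P) \<le> ennreal (c + 1)"
    using chi_sq_le_imp_RN_deriv[OF assms(4)] by auto
  define g where "g x = enn2real (RN_deriv P Q x)" for x
  show g_meas: "g \<in> borel_measurable P" unfolding g_def by simp
  show g_nonneg: "0 \<le> g x" for x unfolding g_def by simp
  have RN_g: "AE x in P. RN_deriv P Q x = ennreal (g x)"
    using P.RN_deriv_finite[OF Q.sigma_finite_measure_axioms ac assms(3)]
    unfolding g_def by eventually_elim (simp add: ennreal_enn2real_if less_top)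
  have "density P (RN_deriv P Q) = density P g"
    using RN_g g_meas by (intro density_cong) auto
  then show "Q = density P g"
    using P.density_RN_deriv[OF ac assms(3)] by simp
  have g_sq_nn: "(\<integral>\<^sup>+x. ennreal ((g x)\<^sup>2) \<partial>P) \<le> ennreal (c + 1)"
  proof -
    have "(\<integral>\<^sup>+x. ennreal ((g x)\<^sup>2) \<partial>P) = (\<integral>\<^sup>+x. (RN_deriv P Q x)\<^sup>2 \<partial>P)"
      using RN_g by (intro nn_integral_cong_AE) (auto simp: ennreal_power g_nonneg)
    with RN_sq show ?thesis by simp
  qed
  show "integrable P (\<lambda>x. (g x)\<^sup>2)"
    using g_sq_nn g_meas by (intro integrableI_bounded) (auto simp: le_less_trans)
  have "(\<integral>x. (g x)\<^sup>2 \<partial>P) = enn2real (\<integral>\<^sup>+x. ennreal ((g x)\<^sup>2) \<partial>P)"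
    using g_meas by (intro integral_eq_nn_integral) auto
  also have "\<dots> \<le> c + 1"
    using g_sq_nn assms(5) by (intro enn2real_leI) auto
  finally show "(\<integral>x. (g x)\<^sup>2 \<partial>P) \<le> c + 1" .
qed

lemma tv_dist_le_of_chi_sq_le:
  assumes P: "prob_space P" and Q: "prob_space Q" and sets_eq: "sets Q = sets P"
    and chi: "chi_sq Q P \<le> ereal (D\<^sup>2)" and "0 \<le> D"
  shows "tv_dist P Q \<le> D"
proof -
  interpret P: prob_space P by fact
  obtain g where g_meas[measurable]: "g \<in> borel_measurable P" and g_nonneg: "\<And>x. 0 \<le> g x"
    and Q_eq: "Q = density P g" and g_sq: "integrable P (\<lambda>x. (g x)\<^sup>2)"
    and g_sq_le: "P.expectation (\<lambda>x. (g x)\<^sup>2) \<le> D\<^sup>2 + 1"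
    using chi_sq_le_densityE[OF P Q sets_eq chi] by auto
  have "P.expectation g = measure Q (space Q)"
    using integral_density[of "\<lambda>_. 1 :: real" P g] g_nonneg Q_eq by simp
  then have g_mean: "P.expectation g = 1"
    using prob_space.prob_space[OF Q] by simp
  show ?thesis
  proof (rule tv_dist_le)
    fix A assume "A \<in> sets P"
    then have "\<bar>measure Q A - measure P A\<bar> \<le> sqrt (P.expectation (\<lambda>x. (g x)\<^sup>2) - 1)"
      unfolding Q_eq using g_nonneg g_sq g_mean by (intro P.measure_density_diff_le_sqrt) auto
    also have "\<dots> \<le> sqrt (D\<^sup>2)"
      using g_sq_le by (intro real_sqrt_le_mono) linarith
    also have "\<dots> = D"
      using \<open>0 \<le> D\<close> by simp
    finally show "\<bar>measure P A - measure Q A\<bar> \<le> D"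
      by (simp add: abs_minus_commute)
  qed
qed

lemma le_mult_sqrt_of_le_one:
  fixes m d c :: real
  assumes "0 \<le> m" "m \<le> 1" "m \<le> d" "1 \<le> c"
  shows "m \<le> c * sqrt d"
proof -
  have "m \<le> sqrt m"
    using assms(1,2) by (intro real_le_rsqrt) (simp add: power2_eq_square mult_left_le)
  also have "\<dots> \<le> sqrt d"
    using assms(3) by simp
  also have "\<dots> \<le> c * sqrt d"
    using assms(1,3,4) by (simp add: mult_le_cancel_right1)
  finally show ?thesis .
qed

theorem theorem5:
  fixes M :: "'a measure" and N :: "'b measure"
    and F :: "nat \<Rightarrow> 'a measure"
    and X Z Zbar :: "nat \<Rightarrow> 'a \<Rightarrow> 'b"
    and p q qbar :: "nat \<Rightarrow> 'b measure"
    and B :: "nat \<Rightarrow> 'b set"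
    and D \<delta> :: "nat \<Rightarrow> real"
  assumes "prob_space M"
    and "filtration (space M) F"
    and "\<And>n. subalgebra M (F n)"
    and "\<And>n. X n \<in> F n \<rightarrow>\<^sub>M N"
    and "\<And>n. Z n \<in> F n \<rightarrow>\<^sub>M N"
    and "\<And>n. Zbar n \<in> F n \<rightarrow>\<^sub>M N"
    and "\<And>n. p n = distr M N (X n)"
    and "\<And>n. q n = distr M N (Z n)"
    and "\<And>n. qbar n = distr M N (Zbar n)"
    and "\<And>n. B n \<in> sets N"
    and "\<And>n. D n \<ge> 0"
    and cond1: "\<And>n \<omega>. \<omega> \<in> space M \<Longrightarrow> (\<forall>k<n. X k \<omega> \<notin> B k) \<Longrightarrow> Z n \<omega> = Zbar n \<omega>"
    and cond2: "\<And>n. chi_sq (qbar n) (p n) \<le> ereal ((D n)\<^sup>2)"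
    and cond3: "\<And>n. measure M {\<omega> \<in> space M. X n \<omega> \<in> B n} \<le> \<delta> n"
  shows "\<forall>n. tv_dist (q n) (qbar n) \<le> (\<Sum>k<n. sqrt ((D k)\<^sup>2 + 1) * sqrt (\<delta> k))
           \<and> tv_dist (p n) (q n) \<le> D n + (\<Sum>k<n. sqrt ((D k)\<^sup>2 + 1) * sqrt (\<delta> k))"
proof (intro allI conjI)
  fix n
  interpret M: prob_space M by fact
  have [measurable]: "X k \<in> M \<rightarrow>\<^sub>M N" "Z k \<in> M \<rightarrow>\<^sub>M N" "Zbar k \<in> M \<rightarrow>\<^sub>M N" "B k \<in> sets N" for k
    using assms(3-6,10) measurable_from_subalg by blast+
  define S where "S = (\<Sum>k<n. sqrt ((D k)\<^sup>2 + 1) * sqrt (\<delta> k))"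
  define C where "C = (\<Union>k<n. {\<omega> \<in> space M. X k \<omega> \<in> B k})"
  txt \<open>Hypothesis (1) is phrased through the X_k, so the union bound needs only delta_k;
    the factor sqrt (D_k^2 + 1) \<ge> 1 in the claimed bound is slack.\<close>
  have "M.prob C \<le> (\<Sum>k<n. M.prob {\<omega> \<in> space M. X k \<omega> \<in> B k})"
    unfolding C_def by (intro M.finite_measure_subadditive_finite) auto
  also have "\<dots> \<le> S"
    unfolding S_def using cond3 by (intro sum_mono le_mult_sqrt_of_le_one) auto
  finally have "M.prob C \<le> S" .
  moreover have "tv_dist (q n) (qbar n) \<le> M.prob C"
    unfolding assms(8,9) C_def using cond1[of _ n] by (intro M.tv_dist_distr_le_prob) auto
  ultimately show q_qbar: "tv_dist (q n) (qbar n) \<le> S"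
    by simp
  have prob_spaces: "prob_space (p n)" "prob_space (q n)" "prob_space (qbar n)"
    using assms(7-9) by (auto intro!: M.prob_space_distr)
  have "tv_dist (p n) (qbar n) \<le> D n"
    using prob_spaces cond2 assms(7,9,11) by (intro tv_dist_le_of_chi_sq_le) auto
  moreover have "tv_dist (p n) (q n) \<le> tv_dist (p n) (qbar n) + tv_dist (qbar n) (q n)"
    using prob_spaces assms(7-9) by (intro tv_dist_triangle) (auto simp: prob_space.finite_measure)
  ultimately show "tv_dist (p n) (q n) \<le> D n + S"
    using q_qbar tv_dist_commute[of "q n" "qbar n"] assms(8,9) by simp
qed

end
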